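(* Let $d\ge2$ and let $v_1,\dots,v_d\in\mathbb{R}^d$ be linearly independent, $\Delta=\mathrm{conv}(O,v_1,\dots,v_d)$. Let $\mathcal H$ be the hyperplane $\mathrm{Aff}(O,\,v_1+(d-1)v_2,\,v_1+(d-1)v_3,\dots,v_1+(d-1)v_d)$, and let $\delta$ be the simplex that $\mathcal H$ cuts off from $\mathrm{conv}(v_1,\dots,v_d)$ on the side containing $v_1$ (i.e. $\delta=\mathrm{conv}(v_1,\dots,v_d)\cap\mathcal H^{+}$, where $\mathcal H^+$ is the closed half-space bounded by $\mathcal H$ containing $v_1$). Let $\Phi$ be the closure of $$\mathbb{R}_+\delta\setminus\Bigl(\bigl(v_1+\mathbb{R}_+v_1+\mathbb{R}_+v_2+\dots+\mathbb{R}_+v_d\bigr)\cup\Delta\Bigr),$$ and $\Phi'=-\frac1{d-1}v_1+\frac d{d-1}\Phi$ (the image of $\Phi$ under the dilatation with center $v_1$ and factor $d/(d-1)$). Then $\Phi'\subset(d+1)\Delta$.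
   Context: $\mathbb{R}_+\delta$ is the cone $\{t x: t\ge0, x\in\delta\}$; $(d+1)\Delta$ is the dilate of $\Delta$ by $d+1$ with center $O$. *)

theory Defs
  imports "HOL-Analysis.Analysis"
begin

definition closed_halfspace_containing :: "'a::euclidean_space set \<Rightarrow> 'a \<Rightarrow> 'a set" where
  "closed_halfspace_containing H p =
     {x. \<exists>a b. a \<noteq> 0 \<and> H = {y. a \<bullet> y = b} \<and> b \<le> a \<bullet> p \<and> b \<le> a \<bullet> x}"

definition nonneg_cone :: "'a::real_vector set \<Rightarrow> 'a set" where
  "nonneg_cone S = {t *\<^sub>R x | t x. 0 \<le> t \<and> x \<in> S}"

end

theory Submission
  imports Defs
begin

text \<open>Work in the coordinates \<open>l\<^sub>i\<close> with respect to the basis \<open>v\<^sub>1, \<dots>, v\<^sub>d\<close> and put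
  \<open>s = l\<^sub>1 + \<dots> + l\<^sub>d\<close>. Then \<open>\<Delta>\<close> is \<open>{l \<ge> 0, s \<le> 1}\<close>, the hyperplane \<open>\<H>\<close> is
  \<open>{d l\<^sub>1 = s}\<close>, and the cone \<open>\<real>\<^sub>+\<delta>\<close> lies in \<open>{l \<ge> 0, s \<le> d l\<^sub>1}\<close>. Removing
  \<open>v\<^sub>1 + \<real>\<^sub>+v\<^sub>1 + \<dots> + \<real>\<^sub>+v\<^sub>d = {l \<ge> 0, l\<^sub>1 \<ge> 1}\<close> and \<open>\<Delta>\<close> leaves a subset of the
  closed set \<open>{l \<ge> 0, 1 \<le> s \<le> d l\<^sub>1, l\<^sub>1 \<le> 1}\<close>, which therefore contains \<open>\<Phi>\<close>. The
  dilatation sends such a point to one with coordinates \<open>(d l\<^sub>i - [i = 1]) / (d - 1)\<close>;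
  these are nonnegative because \<open>d l\<^sub>1 \<ge> s \<ge> 1\<close>, and their sum \<open>(d s - 1) / (d - 1)\<close> is at
  most \<open>d + 1\<close> because \<open>s \<le> d l\<^sub>1 \<le> d\<close>.\<close>

lemma nonneg_cone_subset:
  assumes "cone K" and "S \<subseteq> K"
  shows "nonneg_cone S \<subseteq> K"
  using assms unfolding nonneg_cone_def cone_def by blast

locale indexed_basis =
  fixes v :: "nat \<Rightarrow> 'a::euclidean_space" and n :: nat
  assumes independent_basis: "independent (v ` {1..n})"
    and inj_basis: "inj_on v {1..n}"
    and n_eq_DIM: "n = DIM('a)"
begin

definition coord :: "nat \<Rightarrow> 'a \<Rightarrow> real" where
  "coord i x = representation (v ` {1..n}) x (v i)"

definition coord_sum :: "'a \<Rightarrow> real" where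
  "coord_sum x = (\<Sum>i\<in>{1..n}. coord i x)"

lemma span_basis: "span (v ` {1..n}) = UNIV"
proof -
  have "card (v ` {1..n}) = DIM('a)"
    using inj_basis n_eq_DIM by (simp add: card_image)
  then have "UNIV \<subseteq> span (v ` {1..n})"
    using card_ge_dim_independent[OF _ independent_basis] by auto
  then show ?thesis by auto
qed

lemma coord_add [simp]: "coord i (x + y) = coord i x + coord i y"
  unfolding coord_def using representation_add[OF independent_basis] span_basis by auto

lemma coord_scaleR [simp]: "coord i (c *\<^sub>R x) = c * coord i x"
  unfolding coord_def using representation_scale[OF independent_basis] span_basis by auto

lemma linear_coord: "linear (coord i)"
  by (rule linearI) simp_all

lemma coord_diff [simp]: "coord i (x - y) = coord i x - coord i y"
  using linear_diff[OF linear_coord] .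

lemma continuous_on_coord: "continuous_on A (coord i)"
  using linear_coord linear_conv_bounded_linear linear_continuous_on by blast

lemma coord_basis:
  assumes "i \<in> {1..n}" "j \<in> {1..n}"
  shows "coord i (v j) = (if i = j then 1 else 0)"
  unfolding coord_def using representation_basis[OF independent_basis, of "v j"] assms inj_basis
  by (auto simp: inj_on_eq_iff)

lemma sum_basis_image: "sum f (v ` {1..n}) = (\<Sum>i\<in>{1..n}. f (v i))"
  by (subst sum.reindex[OF inj_basis]) simp

lemma sum_coord_scaleR: "(\<Sum>i\<in>{1..n}. coord i x *\<^sub>R v i) = x"
proof -
  have "(\<Sum>b\<in>v ` {1..n}. representation (v ` {1..n}) x b *\<^sub>R b) = x"
    using sum_representation_eq[OF independent_basis] span_basis by simp
  then show ?thesis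
    unfolding sum_basis_image coord_def .
qed

lemma coord_sum_scaleR_basis:
  assumes "i \<in> {1..n}"
  shows "coord i (\<Sum>j\<in>{1..n}. c j *\<^sub>R v j) = c i"
proof -
  have "coord i (\<Sum>j\<in>{1..n}. c j *\<^sub>R v j) = (\<Sum>j\<in>{1..n}. c j * coord i (v j))"
    by (simp add: linear_sum[OF linear_coord])
  also have "\<dots> = c i"
    using assms by (simp add: coord_basis if_distrib cong: if_cong)
  finally show ?thesis .
qed

lemma coord_sum_add [simp]: "coord_sum (x + y) = coord_sum x + coord_sum y"
  by (simp add: coord_sum_def sum.distrib)

lemma coord_sum_scaleR [simp]: "coord_sum (c *\<^sub>R x) = c * coord_sum x"
  by (simp add: coord_sum_def sum_distrib_left)

lemma coord_sum_diff [simp]: "coord_sum (x - y) = coord_sum x - coord_sum y"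
  by (simp add: coord_sum_def sum_subtractf)

lemma coord_sum_basis:
  assumes "i \<in> {1..n}"
  shows "coord_sum (v i) = 1"
  using assms by (simp add: coord_sum_def coord_basis)

lemma continuous_on_coord_sum: "continuous_on A coord_sum"
  unfolding coord_sum_def[abs_def] by (intro continuous_on_sum continuous_on_coord)

lemma mem_convex_hull_basisD:
  assumes "x \<in> convex hull (v ` {1..n})"
  shows "\<forall>i\<in>{1..n}. 0 \<le> coord i x" and "coord_sum x = 1"
proof -
  obtain u where u0: "\<forall>b\<in>v ` {1..n}. 0 \<le> u b" and u1: "sum u (v ` {1..n}) = 1"
    and x: "(\<Sum>b\<in>v ` {1..n}. u b *\<^sub>R b) = x"
    using assms by (auto simp: convex_hull_finite)
  have coord_x: "coord i x = u (v i)" if "i \<in> {1..n}" for i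
    using x coord_sum_scaleR_basis[OF that, of "u \<circ> v"] unfolding sum_basis_image by simp
  show "\<forall>i\<in>{1..n}. 0 \<le> coord i x"
    using u0 coord_x by simp
  show "coord_sum x = 1"
    using u1 coord_x unfolding sum_basis_image by (simp add: coord_sum_def)
qed

lemma mem_simplexI:
  assumes "\<forall>i\<in>{1..n}. 0 \<le> coord i x" and "coord_sum x \<le> 1"
  shows "x \<in> convex hull (insert 0 (v ` {1..n}))"
proof -
  define u where "u b = coord (inv_into {1..n} v b) x" for b
  have u_basis: "u (v i) = coord i x" if "i \<in> {1..n}" for i
    using that inj_basis by (simp add: u_def)
  have "0 \<notin> v ` {1..n}"
    using independent_basis dependent_zero by blast
  moreover have "\<forall>b\<in>v ` {1..n}. 0 \<le> u b"
    using assms(1) u_basis by auto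
  moreover have "sum u (v ` {1..n}) \<le> 1"
    using assms(2) u_basis unfolding sum_basis_image by (simp add: coord_sum_def)
  moreover have "(\<Sum>b\<in>v ` {1..n}. u b *\<^sub>R b) = x"
    using u_basis sum_coord_scaleR[of x] unfolding sum_basis_image by simp
  ultimately show ?thesis
    by (subst Starlike.simplex) auto
qed

lemma mem_translated_orthantI:
  assumes "\<forall>i\<in>{1..n}. 0 \<le> coord i x" and "1 \<le> coord 1 x"
  shows "x \<in> {v 1 + (\<Sum>i\<in>{1..n}. c i *\<^sub>R v i) | c. \<forall>i. 0 \<le> c i}"
proof -
  define c where "c i = (if i \<in> {1..n} then coord i x - (if i = 1 then 1 else 0) else 0)" for i
  have one: "1 \<in> {1..n}"
    using n_eq_DIM by simp
  have "(\<Sum>i\<in>{1..n}. c i *\<^sub>R v i) = (\<Sum>i\<in>{1..n}. coord i x *\<^sub>R v i - (if i = 1 then v i else 0))"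
    by (intro sum.cong) (auto simp: c_def scaleR_diff_left)
  also have "\<dots> = x - v 1"
    using one sum_coord_scaleR[of x] by (simp add: sum_subtractf)
  finally have "x = v 1 + (\<Sum>i\<in>{1..n}. c i *\<^sub>R v i)"
    by simp
  moreover have "\<forall>i. 0 \<le> c i"
    using assms by (simp add: c_def)
  ultimately show ?thesis
    by blast
qed

lemma inner_eq_if_annihilates_cut_points:
  assumes "\<And>i. i \<in> {2..n} \<Longrightarrow> a \<bullet> (v 1 + (real n - 1) *\<^sub>R v i) = 0"
  shows "(real n - 1) * (a \<bullet> x) = (a \<bullet> v 1) * (real n * coord 1 x - coord_sum x)"
proof -
  have split: "{1..n} = insert 1 {2..n}"
    using n_eq_DIM by (auto simp: DIM_positive Suc_leI)
  have cut: "(real n - 1) * (a \<bullet> v i) = - (a \<bullet> v 1)" if "i \<in> {2..n}" for i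
    using assms[OF that] by (simp add: inner_add_right algebra_simps)
  have "a \<bullet> x = a \<bullet> (\<Sum>i\<in>{1..n}. coord i x *\<^sub>R v i)"
    by (simp only: sum_coord_scaleR)
  then have "a \<bullet> x = (\<Sum>i\<in>{1..n}. coord i x * (a \<bullet> v i))"
    by (simp add: inner_sum_right)
  then have "(real n - 1) * (a \<bullet> x)
      = (real n - 1) * coord 1 x * (a \<bullet> v 1) + (\<Sum>i\<in>{2..n}. coord i x * ((real n - 1) * (a \<bullet> v i)))"
    unfolding split by (simp add: algebra_simps sum_distrib_left)
  also have "(\<Sum>i\<in>{2..n}. coord i x * ((real n - 1) * (a \<bullet> v i))) = - (a \<bullet> v 1) * (\<Sum>i\<in>{2..n}. coord i x)"
    by (simp add: cut sum_distrib_left mult.commute)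
  also have "(real n - 1) * coord 1 x * (a \<bullet> v 1) + - (a \<bullet> v 1) * (\<Sum>i\<in>{2..n}. coord i x)
      = (a \<bullet> v 1) * ((real n - 1) * coord 1 x - (\<Sum>i\<in>{2..n}. coord i x))"
    by (simp add: algebra_simps)
  also have "\<dots> = (a \<bullet> v 1) * (real n * coord 1 x - coord_sum x)"
    unfolding coord_sum_def split by (simp add: algebra_simps)
  finally show ?thesis .
qed

lemma coord_sum_le_if_mem_cut_halfspace:
  assumes n2: "2 \<le> n"
    and x: "x \<in> closed_halfspace_containing
              (affine hull (insert 0 ((\<lambda>i. v 1 + (real n - 1) *\<^sub>R v i) ` {2..n}))) (v 1)"
  shows "coord_sum x \<le> real n * coord 1 x"
proof -
  let ?H = "affine hull (insert 0 ((\<lambda>i. v 1 + (real n - 1) *\<^sub>R v i) ` {2..n}))"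
  obtain a b where a0: "a \<noteq> 0" and H: "?H = {y. a \<bullet> y = b}"
    and b_v1: "b \<le> a \<bullet> v 1" and b_x: "b \<le> a \<bullet> x"
    using x unfolding closed_halfspace_containing_def by blast
  have "0 \<in> ?H"
    by (simp add: hull_inc)
  then have b0: "b = 0"
    using H by simp
  have "v 1 + (real n - 1) *\<^sub>R v i \<in> ?H" if "i \<in> {2..n}" for i
    using that by (intro hull_inc) auto
  then have inner_a: "(real n - 1) * (a \<bullet> y) = (a \<bullet> v 1) * (real n * coord 1 y - coord_sum y)" for y
    using H b0 by (intro inner_eq_if_annihilates_cut_points) auto
  have "a \<bullet> v 1 \<noteq> 0"
  proof
    assume "a \<bullet> v 1 = 0"
    then have "(real n - 1) * (a \<bullet> a) = 0"
      using inner_a[of a] by simp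
    then show False
      using a0 n2 by simp
  qed
  then have "0 < a \<bullet> v 1"
    using b_v1 b0 by simp
  moreover have "0 \<le> (real n - 1) * (a \<bullet> x)"
    using b_x b0 n2 by simp
  then have "0 \<le> (a \<bullet> v 1) * (real n * coord 1 x - coord_sum x)"
    using inner_a[of x] by simp
  ultimately show ?thesis
    by (simp add: zero_le_mult_iff)
qed

definition delta_cone :: "'a set" where
  "delta_cone = {x. (\<forall>i\<in>{1..n}. 0 \<le> coord i x) \<and> coord_sum x \<le> real n * coord 1 x}"

lemma cone_delta_cone: "cone delta_cone"
  unfolding cone_def delta_cone_def by (auto intro: mult_left_mono simp: mult.left_commute)

lemma nonneg_cone_cut_simplex_subset:
  assumes "2 \<le> n"
  shows "nonneg_cone (convex hull (v ` {1..n}) \<inter> closed_halfspace_containing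
           (affine hull (insert 0 ((\<lambda>i. v 1 + (real n - 1) *\<^sub>R v i) ` {2..n}))) (v 1))
         \<subseteq> delta_cone"
  using mem_convex_hull_basisD coord_sum_le_if_mem_cut_halfspace[OF assms]
  by (intro nonneg_cone_subset cone_delta_cone) (auto simp: delta_cone_def)

definition truncated_delta_cone :: "'a set" where
  "truncated_delta_cone = delta_cone \<inter> {x. coord 1 x \<le> 1 \<and> 1 \<le> coord_sum x}"

lemma closed_truncated_delta_cone: "closed truncated_delta_cone"
proof -
  have "truncated_delta_cone = (\<Inter>i\<in>{1..n}. {x. 0 \<le> coord i x})
      \<inter> {x. coord_sum x \<le> real n * coord 1 x} \<inter> {x. coord 1 x \<le> 1} \<inter> {x. 1 \<le> coord_sum x}"
    unfolding truncated_delta_cone_def delta_cone_def by auto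
  then show ?thesis
    by (simp only:) (intro closed_Int closed_INT ballI closed_Collect_le continuous_on_const
        continuous_on_mult continuous_on_coord continuous_on_coord_sum)
qed

lemma diff_subset_truncated_delta_cone:
  "delta_cone - ({v 1 + (\<Sum>i\<in>{1..n}. c i *\<^sub>R v i) | c. \<forall>i. 0 \<le> c i}
                 \<union> convex hull (insert 0 (v ` {1..n})))
   \<subseteq> truncated_delta_cone"
  using mem_translated_orthantI mem_simplexI
  unfolding truncated_delta_cone_def delta_cone_def by fastforce

lemma homothety_truncated_delta_cone:
  assumes n2: "2 \<le> n" and x: "x \<in> truncated_delta_cone"
  shows "(- (1 / (real n - 1))) *\<^sub>R v 1 + (real n / (real n - 1)) *\<^sub>R x
         \<in> (\<lambda>x. (real n + 1) *\<^sub>R x) ` (convex hull (insert 0 (v ` {1..n})))"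
proof -
  define z where "z = (1 / ((real n + 1) * (real n - 1))) *\<^sub>R (real n *\<^sub>R x - v 1)"
  have n1: "0 < real n - 1"
    using n2 by simp
  have one: "1 \<in> {1..n}"
    using n2 by simp
  have coords: "\<forall>i\<in>{1..n}. 0 \<le> coord i x" and s_le: "coord_sum x \<le> real n * coord 1 x"
    and c1: "coord 1 x \<le> 1" and s_ge: "1 \<le> coord_sum x"
    using x unfolding truncated_delta_cone_def delta_cone_def by auto
  have "0 \<le> coord i z" if "i \<in> {1..n}" for i
  proof -
    have "0 \<le> real n * coord i x - coord i (v 1)"
      using that coords s_le s_ge by (auto simp: coord_basis)
    then show ?thesis
      using n1 by (simp add: z_def)
  qed
  moreover have "coord_sum z \<le> 1"
  proof -
    have "coord_sum x \<le> real n"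
      using s_le mult_left_mono[OF c1, of "real n"] by simp
    then have "real n * coord_sum x \<le> real n * real n"
      by (simp add: mult_left_mono)
    then have "real n * coord_sum x - 1 \<le> (real n + 1) * (real n - 1)"
      by (simp add: algebra_simps)
    moreover have "coord_sum z = (real n * coord_sum x - 1) / ((real n + 1) * (real n - 1))"
      using coord_sum_basis[OF one] by (simp add: z_def)
    ultimately show ?thesis
      using n1 by (simp add: pos_divide_le_eq)
  qed
  ultimately have "z \<in> convex hull (insert 0 (v ` {1..n}))"
    by (intro mem_simplexI) auto
  moreover have "(real n + 1) *\<^sub>R z = (1 / (real n - 1)) *\<^sub>R (real n *\<^sub>R x - v 1)"
    by (simp add: z_def)
  then have "(- (1 / (real n - 1))) *\<^sub>R v 1 + (real n / (real n - 1)) *\<^sub>R x = (real n + 1) *\<^sub>R z"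
    by (simp add: scaleR_diff_right)
  ultimately show ?thesis
    by blast
qed

end

theorem mainTheorem9:
  fixes v :: "nat \<Rightarrow> real ^ 'n"
  defines "d \<equiv> CARD('n)"
  assumes d2: "2 \<le> d"
    and indep: "independent (v ` {1..d})" and inj: "inj_on v {1..d}"
  defines "\<Delta> \<equiv> convex hull (insert 0 (v ` {1..d}))"
    and "H \<equiv> affine hull (insert 0 ((\<lambda>i. v 1 + (real d - 1) *\<^sub>R v i) ` {2..d}))"
  defines "\<delta> \<equiv> convex hull (v ` {1..d}) \<inter> closed_halfspace_containing H (v 1)"
  defines "\<Phi> \<equiv> closure (nonneg_cone \<delta> -
              ({v 1 + (\<Sum>i\<in>{1..d}. c i *\<^sub>R v i) | c. \<forall>i. 0 \<le> c i} \<union> \<Delta>))"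
  defines "\<Phi>' \<equiv> (\<lambda>x. (- (1 / (real d - 1))) *\<^sub>R v 1 + (real d / (real d - 1)) *\<^sub>R x) ` \<Phi>"
  shows "\<Phi>' \<subseteq> (\<lambda>x. (real d + 1) *\<^sub>R x) ` \<Delta>"
proof -
  interpret indexed_basis v d
    using indep inj by unfold_locales (simp_all add: d_def)
  have "nonneg_cone \<delta> - ({v 1 + (\<Sum>i\<in>{1..d}. c i *\<^sub>R v i) | c. \<forall>i. 0 \<le> c i} \<union> \<Delta>)
        \<subseteq> truncated_delta_cone"
    using nonneg_cone_cut_simplex_subset[OF d2] diff_subset_truncated_delta_cone
    unfolding \<delta>_def H_def \<Delta>_def by blast
  then have "\<Phi> \<subseteq> truncated_delta_cone"
    unfolding \<Phi>_def using closed_truncated_delta_cone by (rule closure_minimal)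
  then show ?thesis
    unfolding \<Phi>'_def \<Delta>_def using homothety_truncated_delta_cone[OF d2] by blast
qed

end
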